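(* Let $x_0>0$ and let $u:[x_0,b)\to(0,\infty)$ be a solution of $\frac{u''}{1+(u')^2}=\frac{xu'}{2}-\frac u2+\frac{n-1}{u}$ with $u(x_0)<\sqrt{2(n-1)}$ and $u'(x_0)=0$. Then $u$ is strictly convex on $[x_0,b)$.
   Context: $n\ge2$ is a fixed integer. *)

theory Defs
  imports "HOL-Analysis.Analysis" "HOL-Library.Extended_Real"
begin

definition strict_convex_on_real :: "real set \<Rightarrow> (real \<Rightarrow> real) \<Rightarrow> bool" where
  "strict_convex_on_real S f \<longleftrightarrow> convex S \<and>
     (\<forall>x\<in>S. \<forall>y\<in>S. x \<noteq> y \<longrightarrow> (\<forall>t. 0 < t \<and> t < 1 \<longrightarrow>
        f ((1 - t) * x + t * y) < (1 - t) * f x + t * f y))"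

end

theory Submission
  imports Defs
begin

text \<open>
  With \<open>m = n - 1\<close> and \<open>W\<close> the right-hand side of the equation, \<open>u'' = F := (1 + u'\<^sup>2) W\<close>.
  Both \<open>F\<close> and \<open>\<theta> = x u F - (u - x u') u'\<close> are positive at \<open>x\<^sub>0\<close>, where \<open>u' = 0\<close> and \<open>u\<^sup>2 < 2m\<close>,
  and they stay positive: at a first point \<open>x\<^sub>1\<close> where one of them vanishes, \<open>u'\<close> has increased, so
  \<open>u'(x\<^sub>1) > 0\<close>. Then \<open>F(x\<^sub>1) = 0\<close> would give \<open>\<theta>(x\<^sub>1) = -2m u'/u < 0\<close>, whereas \<open>\<theta>(x\<^sub>1) = 0 < F(x\<^sub>1)\<close>
  forces \<open>u - x u' > 0\<close> there, so that \<open>\<theta>'(x\<^sub>1) = 2x u' F + 2u'\<^sup>2 W (u - x u') > 0\<close> (in general \<open>\<theta>'\<close>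
  is this plus a multiple of \<open>\<theta>\<close>), making \<open>\<theta>\<close> negative just before \<open>x\<^sub>1\<close>.
  Hence \<open>u'' > 0\<close>, \<open>u'\<close> is strictly increasing, and \<open>u\<close> is strictly convex.
\<close>

lemma MVT_within:
  fixes f f' :: "real \<Rightarrow> real"
  assumes "a < c" "{a..c} \<subseteq> S"
    and "\<And>x. x \<in> S \<Longrightarrow> (f has_real_derivative f' x) (at x within S)"
  shows "\<exists>\<xi>. a < \<xi> \<and> \<xi> < c \<and> f c - f a = f' \<xi> * (c - a)"
proof -
  have "\<exists>x\<in>{a<..<c}. f c - f a = (\<lambda>h. f' x * h) (c - a)"
  proof (rule mvt_simple[OF assms(1)])
    fix x assume "a \<le> x" "x \<le> c"
    then have "x \<in> S" using assms(2) by auto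
    then have "(f has_real_derivative f' x) (at x within {a..c})"
      using assms(2,3) has_field_derivative_subset by blast
    then show "(f has_derivative (\<lambda>h. f' x * h)) (at x within {a..c})"
      by (simp add: has_field_derivative_def mult_commute_abs)
  qed
  then show ?thesis by auto
qed

lemma less_if_has_real_derivative_pos_within:
  fixes f f' :: "real \<Rightarrow> real"
  assumes "a < c" "{a..c} \<subseteq> S"
    and "\<And>x. x \<in> S \<Longrightarrow> (f has_real_derivative f' x) (at x within S)"
    and "\<And>x. a < x \<Longrightarrow> x < c \<Longrightarrow> f' x > 0"
  shows "f a < f c"
proof -
  obtain \<xi> where "a < \<xi>" "\<xi> < c" "f c - f a = f' \<xi> * (c - a)"
    using MVT_within[OF assms(1-3)] by blast
  moreover from this have "f' \<xi> * (c - a) > 0" using assms(1,4) by simp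
  ultimately show ?thesis by linarith
qed

lemma strict_convex_on_realI:
  fixes f f' :: "real \<Rightarrow> real"
  assumes S: "connected S"
    and f': "\<And>x. x \<in> S \<Longrightarrow> (f has_real_derivative f' x) (at x within S)"
    and mono: "\<And>x y. x \<in> S \<Longrightarrow> y \<in> S \<Longrightarrow> x < y \<Longrightarrow> f' x < f' y"
  shows "strict_convex_on_real S f"
proof -
  have ivl: "{x..y} \<subseteq> S" if "x \<in> S" "y \<in> S" for x y
    using connected_contains_Icc[OF S that] .
  have less: "f ((1 - t) * x + t * y) < (1 - t) * f x + t * f y"
    if xy: "x \<in> S" "y \<in> S" "x < y" and t: "0 < t" "t < 1" for x y t
  proof -
    define z where "z = (1 - t) * x + t * y"
    have z_diff: "z - x = t * (y - x)" "y - z = (1 - t) * (y - x)"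
      by (simp_all add: z_def algebra_simps)
    have "t * (y - x) > 0" "(1 - t) * (y - x) > 0" using xy t by simp_all
    then have "x < z" "z < y" unfolding atomize_conj using z_diff by linarith
    have "{x..z} \<subseteq> S" "{z..y} \<subseteq> S"
      using ivl[OF xy(1,2)] \<open>x < z\<close> \<open>z < y\<close> by auto
    obtain a where a: "x < a" "a < z" "f z - f x = f' a * (z - x)"
      using MVT_within[OF \<open>x < z\<close> \<open>{x..z} \<subseteq> S\<close> f'] by blast
    obtain c where c: "z < c" "c < y" "f y - f z = f' c * (y - z)"
      using MVT_within[OF \<open>z < y\<close> \<open>{z..y} \<subseteq> S\<close> f'] by blast
    have "a \<in> S" "c \<in> S" using ivl[OF xy(1,2)] a c \<open>x < z\<close> \<open>z < y\<close> by auto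
    then have "f' a < f' c" using a(2) c(1) by (intro mono) auto
    have "(1 - t) * f x + t * f y - f z = t * (f y - f z) - (1 - t) * (f z - f x)"
      by (simp add: algebra_simps)
    also have "\<dots> = (f' c - f' a) * (t * (1 - t) * (y - x))"
      unfolding a(3) c(3) z_diff by (simp add: algebra_simps)
    also have "\<dots> > 0" using \<open>f' a < f' c\<close> xy t by simp
    finally show ?thesis by (simp add: z_def)
  qed
  show ?thesis
    unfolding strict_convex_on_real_def
  proof (intro conjI ballI impI allI)
    show "convex S" using S is_interval_connected_1 is_interval_convex_1 by blast
  next
    fix x y t :: real assume xy: "x \<in> S" "y \<in> S" "x \<noteq> y" and t: "0 < t \<and> t < 1"
    show "f ((1 - t) * x + t * y) < (1 - t) * f x + t * f y"
    proof (cases "x < y")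
      case True then show ?thesis using less xy t by blast
    next
      case False
      then have "f ((1 - (1 - t)) * y + (1 - t) * x) < (1 - (1 - t)) * f y + (1 - t) * f x"
        using less[of y x "1 - t"] xy t by simp
      then show ?thesis by (simp add: algebra_simps)
    qed
  qed
qed

lemma first_zero_real:
  fixes h :: "real \<Rightarrow> real"
  assumes "a \<le> c" "continuous_on {a..c} h" "h a > 0" "h c \<le> 0"
  shows "\<exists>x\<^sub>1. a < x\<^sub>1 \<and> x\<^sub>1 \<le> c \<and> h x\<^sub>1 = 0 \<and> (\<forall>t. a \<le> t \<and> t < x\<^sub>1 \<longrightarrow> h t > 0)"
proof -
  define Z where "Z = {t \<in> {a..c}. h t = 0}"
  have "Z \<noteq> {}"
    using IVT2'[of h c 0 a] assms by (auto simp: Z_def)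
  moreover have "bdd_below Z" by (auto simp: Z_def)
  moreover have "closed Z"
    unfolding Z_def using assms(2) by (intro continuous_closed_preimage_constant) auto
  ultimately have "Inf Z \<in> Z" by (rule closed_contains_Inf)
  moreover have "h t > 0" if t: "a \<le> t" "t < Inf Z" for t
  proof (rule ccontr)
    assume "\<not> h t > 0"
    have "t \<le> c" using \<open>Inf Z \<in> Z\<close> t by (auto simp: Z_def)
    have "continuous_on {a..t} h"
      using assms(2) by (rule continuous_on_subset) (use \<open>t \<le> c\<close> in auto)
    then obtain s where "a \<le> s" "s \<le> t" "h s = 0"
      using IVT2'[of h t 0 a] assms(3) t(1) \<open>\<not> h t > 0\<close> by force
    then have "Inf Z \<le> s"
      using \<open>bdd_below Z\<close> \<open>t \<le> c\<close> by (intro cInf_lower) (auto simp: Z_def)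
    then show False using \<open>s \<le> t\<close> t(2) by simp
  qed
  moreover have "a < Inf Z" "Inf Z \<le> c" "h (Inf Z) = 0"
    using \<open>Inf Z \<in> Z\<close> assms(3) by (auto simp: Z_def order.order_iff_strict)
  ultimately show ?thesis by blast
qed

locale shrinker_ode =
  fixes m x\<^sub>0 :: real and D :: "real set" and u u' u'' :: "real \<Rightarrow> real"
  assumes m_pos: "m > 0"
    and connected: "connected D"
    and x0_in: "x\<^sub>0 \<in> D" and x0_le: "\<And>x. x \<in> D \<Longrightarrow> x\<^sub>0 \<le> x" and x0_pos: "x\<^sub>0 > 0"
    and u_pos: "\<And>x. x \<in> D \<Longrightarrow> u x > 0"
    and u_deriv: "\<And>x. x \<in> D \<Longrightarrow> (u has_real_derivative u' x) (at x within D)"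
    and u'_deriv: "\<And>x. x \<in> D \<Longrightarrow> (u' has_real_derivative u'' x) (at x within D)"
    and ode: "\<And>x. x \<in> D \<Longrightarrow> u'' x / (1 + (u' x)\<^sup>2) = x * u' x / 2 - u x / 2 + m / u x"
    and init: "(u x\<^sub>0)\<^sup>2 < 2 * m"
    and init': "u' x\<^sub>0 = 0"
begin

definition W :: "real \<Rightarrow> real" where
  "W x = x * u' x / 2 - u x / 2 + m / u x"

definition F :: "real \<Rightarrow> real" where
  "F x = (1 + (u' x)\<^sup>2) * W x"

definition \<theta> :: "real \<Rightarrow> real" where
  "\<theta> x = x * u x * F x - (u x - x * u' x) * u' x"

lemma Icc_subset: "a \<in> D \<Longrightarrow> c \<in> D \<Longrightarrow> {a..c} \<subseteq> D"
  using connected_contains_Icc[OF connected] .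

lemma one_plus_square_pos: "1 + (u' x)\<^sup>2 > 0"
  by (simp add: add_pos_nonneg)

lemma u''_eq_F: "x \<in> D \<Longrightarrow> u'' x = F x"
  using ode[of x] one_plus_square_pos[of x]
  by (simp add: F_def W_def divide_eq_eq mult.commute)

lemma u'_has_derivative_F: "x \<in> D \<Longrightarrow> (u' has_real_derivative F x) (at x within D)"
  using u'_deriv u''_eq_F by metis

lemma W_has_derivative:
  assumes "x \<in> D"
  shows "(W has_real_derivative x * F x / 2 - m * u' x / (u x)\<^sup>2) (at x within D)"
  unfolding W_def[abs_def]
  using u_deriv[OF assms] u'_has_derivative_F[OF assms] u_pos[OF assms]
  by (auto intro!: derivative_eq_intros simp: field_simps power2_eq_square)

lemma F_has_derivative:
  assumes "x \<in> D"
  shows "(F has_real_derivative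
           2 * u' x * F x * W x + (1 + (u' x)\<^sup>2) * (x * F x / 2 - m * u' x / (u x)\<^sup>2)) (at x within D)"
  unfolding F_def[abs_def]
  using u'_has_derivative_F[OF assms] W_has_derivative[OF assms] u_pos[OF assms]
  by (auto intro!: derivative_eq_intros simp: F_def field_simps power2_eq_square)

lemma \<theta>_has_derivative:
  assumes "x \<in> D"
  shows "(\<theta> has_real_derivative
           (2 * u' x * W x + (1 + (u' x)\<^sup>2) * x / 2) * \<theta> x
           + 2 * x * u' x * F x + 2 * (u' x)\<^sup>2 * W x * (u x - x * u' x)) (at x within D)"
  unfolding \<theta>_def[abs_def]
  using u_deriv[OF assms] u'_has_derivative_F[OF assms] F_has_derivative[OF assms] u_pos[OF assms]
  by (auto intro!: derivative_eq_intros simp: \<theta>_def F_def W_def field_simps power2_eq_square)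

lemma continuous_on_F: "continuous_on D F"
  using F_has_derivative DERIV_continuous continuous_on_eq_continuous_within by blast

lemma continuous_on_\<theta>: "continuous_on D \<theta>"
  using \<theta>_has_derivative DERIV_continuous continuous_on_eq_continuous_within by blast

lemma F_x0_pos: "F x\<^sub>0 > 0"
proof -
  have "u x\<^sub>0 > 0" using u_pos x0_in by blast
  then have "W x\<^sub>0 = (2 * m - (u x\<^sub>0)\<^sup>2) / (2 * u x\<^sub>0)"
    by (simp add: W_def init' field_simps power2_eq_square)
  also have "\<dots> > 0" using init \<open>u x\<^sub>0 > 0\<close> by simp
  finally show ?thesis by (simp add: F_def init')
qed

lemma \<theta>_x0_pos: "\<theta> x\<^sub>0 > 0"
  using F_x0_pos x0_pos u_pos[OF x0_in] by (simp add: \<theta>_def init')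

lemma \<theta>_neg_if_F_eq_0:
  assumes "x \<in> D" "F x = 0" "u' x > 0"
  shows "\<theta> x < 0"
proof -
  have "W x = 0" using assms(2) one_plus_square_pos[of x] by (simp add: F_def)
  then have "u x - x * u' x = 2 * m / u x"
    using u_pos[OF assms(1)] by (simp add: W_def field_simps)
  then have "\<theta> x = - (2 * m / u x * u' x)" using assms(2) by (simp add: \<theta>_def)
  moreover have "2 * m / u x * u' x > 0" using m_pos u_pos[OF assms(1)] assms(3) by simp
  ultimately show ?thesis by simp
qed

lemma \<theta>_neg_before_zero:
  assumes "x\<^sub>1 \<in> D" "x\<^sub>0 < x\<^sub>1" "\<theta> x\<^sub>1 = 0" "F x\<^sub>1 > 0" "u' x\<^sub>1 > 0"
  shows "\<exists>t. x\<^sub>0 \<le> t \<and> t < x\<^sub>1 \<and> \<theta> t < 0"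
proof -
  have "u x\<^sub>1 - x\<^sub>1 * u' x\<^sub>1 \<ge> 0"
  proof (rule ccontr)
    assume "\<not> ?thesis"
    then have "(u x\<^sub>1 - x\<^sub>1 * u' x\<^sub>1) * u' x\<^sub>1 < 0" using assms(5) by (simp add: mult_neg_pos)
    moreover have "x\<^sub>1 * u x\<^sub>1 * F x\<^sub>1 > 0" using x0_pos assms(2,4) u_pos[OF assms(1)] by simp
    ultimately show False using assms(3) by (simp add: \<theta>_def)
  qed
  moreover have "W x\<^sub>1 > 0"
    using assms(4) one_plus_square_pos[of x\<^sub>1] by (simp add: F_def zero_less_mult_iff)
  moreover have "2 * x\<^sub>1 * u' x\<^sub>1 * F x\<^sub>1 > 0" using x0_pos assms(2,4,5) by simp
  ultimately have "0 < (2 * u' x\<^sub>1 * W x\<^sub>1 + (1 + (u' x\<^sub>1)\<^sup>2) * x\<^sub>1 / 2) * \<theta> x\<^sub>1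
      + 2 * x\<^sub>1 * u' x\<^sub>1 * F x\<^sub>1 + 2 * (u' x\<^sub>1)\<^sup>2 * W x\<^sub>1 * (u x\<^sub>1 - x\<^sub>1 * u' x\<^sub>1)"
    using assms(3) by (simp add: add_pos_nonneg)
  from has_real_derivative_pos_inc_left[OF \<theta>_has_derivative[OF assms(1)] this]
  obtain d where d: "d > 0" "\<And>h. 0 < h \<Longrightarrow> x\<^sub>1 - h \<in> D \<Longrightarrow> h < d \<Longrightarrow> \<theta> (x\<^sub>1 - h) < \<theta> x\<^sub>1"
    by blast
  define \<delta> where "\<delta> = min d (x\<^sub>1 - x\<^sub>0) / 2"
  have \<delta>: "0 < \<delta>" "\<delta> < d" "x\<^sub>0 \<le> x\<^sub>1 - \<delta>"
    using d(1) assms(2) by (auto simp: \<delta>_def min_def field_simps)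
  then have "x\<^sub>1 - \<delta> \<in> D" using Icc_subset[OF x0_in assms(1)] by auto
  then have "\<theta> (x\<^sub>1 - \<delta>) < 0" using d(2) \<delta> assms(3) by simp
  moreover have "x\<^sub>1 - \<delta> < x\<^sub>1" using \<delta>(1) by simp
  ultimately show ?thesis using \<delta>(3) by blast
qed

lemma F_pos_and_\<theta>_pos:
  assumes "x \<in> D"
  shows "F x > 0 \<and> \<theta> x > 0"
proof (rule ccontr)
  assume neg: "\<not> (F x > 0 \<and> \<theta> x > 0)"
  define h where "h t = min (F t) (\<theta> t)" for t
  have "continuous_on {x\<^sub>0..x} h"
    unfolding h_def using continuous_on_F continuous_on_\<theta> Icc_subset[OF x0_in assms]
    by (blast intro: continuous_on_min continuous_on_subset)
  moreover have "h x\<^sub>0 > 0" using F_x0_pos \<theta>_x0_pos by (simp add: h_def)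
  moreover have "h x \<le> 0" using neg by (auto simp: h_def)
  ultimately obtain x\<^sub>1 where x\<^sub>1: "x\<^sub>0 < x\<^sub>1" "x\<^sub>1 \<le> x" "h x\<^sub>1 = 0"
    and h_pos: "\<forall>t. x\<^sub>0 \<le> t \<and> t < x\<^sub>1 \<longrightarrow> h t > 0"
    using first_zero_real[OF x0_le[OF assms]] by blast
  then have before: "\<And>t. x\<^sub>0 \<le> t \<Longrightarrow> t < x\<^sub>1 \<Longrightarrow> F t > 0 \<and> \<theta> t > 0"
    by (simp add: h_def)
  have "x\<^sub>1 \<in> D" using Icc_subset[OF x0_in assms] x\<^sub>1 by auto
  have "u' x\<^sub>0 < u' x\<^sub>1"
    using before by (intro less_if_has_real_derivative_pos_within[OF x\<^sub>1(1)
        Icc_subset[OF x0_in \<open>x\<^sub>1 \<in> D\<close>] u'_has_derivative_F]) auto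
  then have "u' x\<^sub>1 > 0" by (simp add: init')
  consider "F x\<^sub>1 = 0" "\<theta> x\<^sub>1 \<ge> 0" | "\<theta> x\<^sub>1 = 0" "F x\<^sub>1 > 0"
    using x\<^sub>1(3) by (fastforce simp: h_def min_def split: if_splits)
  then show False
  proof cases
    case 1
    then show False using \<theta>_neg_if_F_eq_0[OF \<open>x\<^sub>1 \<in> D\<close> _ \<open>u' x\<^sub>1 > 0\<close>] by simp
  next
    case 2
    then obtain t where "x\<^sub>0 \<le> t" "t < x\<^sub>1" "\<theta> t < 0"
      using \<theta>_neg_before_zero[OF \<open>x\<^sub>1 \<in> D\<close> x\<^sub>1(1)] \<open>u' x\<^sub>1 > 0\<close> by blast
    then show False using before[of t] by simp
  qed
qed

lemma u'_strict_mono: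
  assumes "x \<in> D" "y \<in> D" "x < y"
  shows "u' x < u' y"
proof (rule less_if_has_real_derivative_pos_within[OF assms(3) Icc_subset[OF assms(1,2)]
      u'_has_derivative_F])
  fix t assume "x < t" "t < y"
  then have "t \<in> D" using Icc_subset[OF assms(1,2)] by auto
  then show "F t > 0" using F_pos_and_\<theta>_pos by blast
qed

theorem strict_convex: "strict_convex_on_real D u"
  using strict_convex_on_realI[OF connected u_deriv u'_strict_mono] .

end

theorem lemma2p10:
  fixes n :: nat and x0 :: real and b :: ereal
    and u u' u'' :: "real \<Rightarrow> real"
  assumes n: "n \<ge> 2"
    and x0: "x0 > 0"
    and b: "ereal x0 < b"
    and pos: "\<And>x. x0 \<le> x \<Longrightarrow> ereal x < b \<Longrightarrow> u x > 0"
    and d1: "\<And>x. x0 \<le> x \<Longrightarrow> ereal x < b \<Longrightarrow>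
               (u has_real_derivative u' x) (at x within {y. x0 \<le> y \<and> ereal y < b})"
    and d2: "\<And>x. x0 \<le> x \<Longrightarrow> ereal x < b \<Longrightarrow>
               (u' has_real_derivative u'' x) (at x within {y. x0 \<le> y \<and> ereal y < b})"
    and ode: "\<And>x. x0 \<le> x \<Longrightarrow> ereal x < b \<Longrightarrow>
               u'' x / (1 + (u' x)\<^sup>2) = x * u' x / 2 - u x / 2 + (real n - 1) / u x"
    and init: "u x0 < sqrt (2 * (real n - 1))"
    and init': "u' x0 = 0"
  shows "strict_convex_on_real {x. x0 \<le> x \<and> ereal x < b} u"
proof -
  have "(u x0)\<^sup>2 < (sqrt (2 * (real n - 1)))\<^sup>2"
    using init pos[of x0] b by (intro power_strict_mono) auto
  then have init_sq: "(u x0)\<^sup>2 < 2 * (real n - 1)" using n by simp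
  have "is_interval {x. x0 \<le> x \<and> ereal x < b}"
    unfolding is_interval_1 by (auto; metis ereal_less_eq(3) le_less_trans)
  then have connected: "connected {x. x0 \<le> x \<and> ereal x < b}"
    by (simp add: is_interval_connected_1)
  interpret shrinker_ode "real n - 1" x0 "{x. x0 \<le> x \<and> ereal x < b}" u u' u''
    using n x0 b connected pos d1 d2 ode init_sq init' by unfold_locales auto
  show ?thesis by (rule strict_convex)
qed

end
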